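(* Let $\vec{p'}=(p'_{kl})$ be a probability vector of length $N^2$ and $\mathcal{L}=\sum_{k,l}p'_{kl}\mathcal{L}_{kl}$ with $\mathcal{L}_{kl}=U_{kl}\otimes\overline{U}_{kl}-\mathbb{I}_{N^2}$. Then the $N\times N$ matrix $\mathcal{K}$ with entries $\mathcal{K}_{ij}=\langle ii|\mathcal{L}|jj\rangle$ (the decohered and reshaped diagonal of the reshuffled generator) equals $$\mathcal{K}=\sum_{k=0}^{N-1}q'_kX^k-\mathbb{I}_N=\sum_kq'_k\mathcal{K}_k,\qquad q'_k=\sum_lp'_{kl},\ \ \mathcal{K}_k=X^k-\mathbb{I}_N,$$ and $\mathcal{K}$ (as well as each $\mathcal{K}_k$) is a valid Kolmogorov operator: $\mathcal{K}_{ij}\ge0$ for $i\ne j$ and $\sum_i\mathcal{K}_{ij}=0$ for every $j$.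
   Context: Let $N\ge2$, $\omega=e^{2\pi i/N}$, $X|j\rangle=|j\oplus1\rangle$ (addition mod $N$), $Z=\mathrm{diag}(1,\omega,\dots,\omega^{N-1})$, Weyl unitaries $U_{kl}=X^kZ^l$. Superoperators are $N^2\times N^2$ matrices acting on $|A\rangle\rangle=\sum A_{ij}|i\rangle|j\rangle$, with $\rho\mapsto K\rho K^\dagger$ corresponding to $K\otimes\overline K$; $|ii\rangle=|i\rangle\otimes|i\rangle$. *)

theory Defs
  imports Complex_Main
begin

text \<open>N x N matrices are functions nat \<Rightarrow> nat \<Rightarrow> complex, meaningful on indices < N.
 Superoperators (N^2 x N^2 matrices) are indexed by pairs (i,j) with i,j < N,
 the pair (i,j) standing for the basis vector |i>|j>.\<close>

definition omega :: "nat \<Rightarrow> complex" where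
  "omega N = cis (2 * pi / real N)"

definition Xmat :: "nat \<Rightarrow> nat \<Rightarrow> nat \<Rightarrow> complex" where
  "Xmat N i j = (if i = (j + 1) mod N then 1 else 0)"

definition Zmat :: "nat \<Rightarrow> nat \<Rightarrow> nat \<Rightarrow> complex" where
  "Zmat N i j = (if i = j then omega N ^ i else 0)"

definition idmat :: "nat \<Rightarrow> nat \<Rightarrow> complex" where
  "idmat i j = (if i = j then 1 else 0)"

definition mmult :: "nat \<Rightarrow> (nat \<Rightarrow> nat \<Rightarrow> complex) \<Rightarrow> (nat \<Rightarrow> nat \<Rightarrow> complex)
    \<Rightarrow> nat \<Rightarrow> nat \<Rightarrow> complex" where
  "mmult N A B i j = (\<Sum>r<N. A i r * B r j)"

fun mpow :: "nat \<Rightarrow> (nat \<Rightarrow> nat \<Rightarrow> complex) \<Rightarrow> nat \<Rightarrow> nat \<Rightarrow> nat \<Rightarrow> complex" where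
  "mpow N A 0 = idmat"
| "mpow N A (Suc k) = mmult N A (mpow N A k)"

definition Weyl :: "nat \<Rightarrow> nat \<Rightarrow> nat \<Rightarrow> nat \<Rightarrow> nat \<Rightarrow> complex" where
  "Weyl N k l = mmult N (mpow N (Xmat N) k) (mpow N (Zmat N) l)"

definition kron_conj :: "(nat \<Rightarrow> nat \<Rightarrow> complex) \<Rightarrow> nat \<times> nat \<Rightarrow> nat \<times> nat \<Rightarrow> complex" where
  "kron_conj K a b = K (fst a) (fst b) * cnj (K (snd a) (snd b))"

definition sid :: "nat \<times> nat \<Rightarrow> nat \<times> nat \<Rightarrow> complex" where
  "sid a b = (if a = b then 1 else 0)"

definition Lkl :: "nat \<Rightarrow> nat \<Rightarrow> nat \<Rightarrow> nat \<times> nat \<Rightarrow> nat \<times> nat \<Rightarrow> complex" where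
  "Lkl N k l a b = kron_conj (Weyl N k l) a b - sid a b"

definition Lgen :: "nat \<Rightarrow> (nat \<Rightarrow> nat \<Rightarrow> real) \<Rightarrow> nat \<times> nat \<Rightarrow> nat \<times> nat \<Rightarrow> complex" where
  "Lgen N p a b = (\<Sum>k<N. \<Sum>l<N. complex_of_real (p k l) * Lkl N k l a b)"

definition Kmat :: "nat \<Rightarrow> (nat \<Rightarrow> nat \<Rightarrow> real) \<Rightarrow> nat \<Rightarrow> nat \<Rightarrow> complex" where
  "Kmat N p i j = Lgen N p (i, i) (j, j)"

definition qmarg :: "nat \<Rightarrow> (nat \<Rightarrow> nat \<Rightarrow> real) \<Rightarrow> nat \<Rightarrow> real" where
  "qmarg N p k = (\<Sum>l<N. p k l)"

definition kolmogorov :: "nat \<Rightarrow> (nat \<Rightarrow> nat \<Rightarrow> complex) \<Rightarrow> bool" where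
  "kolmogorov N M \<longleftrightarrow>
     (\<forall>i<N. \<forall>j<N. M i j \<in> \<real>) \<and>
     (\<forall>i<N. \<forall>j<N. i \<noteq> j \<longrightarrow> 0 \<le> Re (M i j)) \<and>
     (\<forall>j<N. (\<Sum>i<N. M i j) = 0)"

end

theory Submission
  imports Defs
begin

text \<open>The phases of \<open>Z\<^sup>l\<close> cancel against their conjugates in \<open>U\<^sub>k\<^sub>l \<otimes> conj U\<^sub>k\<^sub>l\<close>,
  so on the diagonal \<open>|ii\<rangle>\<rangle>\<close> every \<open>\<L>\<^sub>k\<^sub>l\<close> acts as \<open>X\<^sup>k - I\<close>; summing over \<open>l\<close> turns the
  weights \<open>p\<^sub>k\<^sub>l\<close> into their marginals \<open>q\<^sub>k\<close>. Each \<open>X\<^sup>k - I\<close> is a Kolmogorov operator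
  (a permutation matrix minus the identity), and Kolmogorov operators are closed under
  nonnegative combinations.\<close>

lemma mpow_Xmat:
  assumes "i < N" "j < N"
  shows "mpow N (Xmat N) k i j = (if i = (j + k) mod N then 1 else 0)"
  using assms(1)
proof (induction k arbitrary: i)
  case 0
  then show ?case using assms(2) by (simp add: idmat_def)
next
  case (Suc k)
  have "mpow N (Xmat N) (Suc k) i j = (\<Sum>r<N. Xmat N i r * mpow N (Xmat N) k r j)"
    by (simp add: mmult_def)
  also have "\<dots> = (\<Sum>r<N. if r = (j + k) mod N then Xmat N i r else 0)"
    using Suc.IH by (intro sum.cong) auto
  also have "\<dots> = Xmat N i ((j + k) mod N)"
    using assms(2) by (simp add: sum.delta)
  also have "\<dots> = (if i = (j + Suc k) mod N then 1 else 0)"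
    by (simp add: Xmat_def mod_Suc_eq)
  finally show ?case .
qed

lemma mpow_Zmat:
  assumes "i < N" "j < N"
  shows "mpow N (Zmat N) l i j = (if i = j then omega N ^ (i * l) else 0)"
  using assms(1)
proof (induction l arbitrary: i)
  case 0
  then show ?case by (simp add: idmat_def)
next
  case (Suc l)
  have "mpow N (Zmat N) (Suc l) i j = (\<Sum>r<N. Zmat N i r * mpow N (Zmat N) l r j)"
    by (simp add: mmult_def)
  also have "\<dots> = (\<Sum>r<N. if r = i then omega N ^ i * mpow N (Zmat N) l r j else 0)"
    by (intro sum.cong) (auto simp: Zmat_def)
  also have "\<dots> = omega N ^ i * mpow N (Zmat N) l i j"
    using Suc.prems by (simp add: sum.delta')
  also have "\<dots> = (if i = j then omega N ^ (i * Suc l) else 0)"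
    using Suc by (simp add: power_add mult.commute)
  finally show ?case .
qed

lemma Weyl_eq:
  assumes "i < N" "j < N"
  shows "Weyl N k l i j = mpow N (Xmat N) k i j * omega N ^ (j * l)"
proof -
  have "Weyl N k l i j = (\<Sum>r<N. mpow N (Xmat N) k i r * mpow N (Zmat N) l r j)"
    by (simp add: Weyl_def mmult_def)
  also have "\<dots> = (\<Sum>r<N. if r = j then mpow N (Xmat N) k i j * omega N ^ (j * l) else 0)"
    using assms by (intro sum.cong) (auto simp: mpow_Zmat)
  also have "\<dots> = mpow N (Xmat N) k i j * omega N ^ (j * l)"
    using assms by (simp add: sum.delta')
  finally show ?thesis .
qed

lemma omega_power_mult_cnj: "omega N ^ m * cnj (omega N ^ m) = 1"
proof -
  have "norm (omega N ^ m) = 1"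
    by (simp add: omega_def norm_power)
  then show ?thesis
    using complex_norm_square[of "omega N ^ m"] by simp
qed

lemma Lkl_diag:
  assumes "i < N" "j < N"
  shows "Lkl N k l (i, i) (j, j) = mpow N (Xmat N) k i j - idmat i j"
proof -
  have "Weyl N k l i j * cnj (Weyl N k l i j)
      = (mpow N (Xmat N) k i j * cnj (mpow N (Xmat N) k i j))
        * (omega N ^ (j * l) * cnj (omega N ^ (j * l)))"
    using assms by (simp add: Weyl_eq algebra_simps)
  also have "\<dots> = mpow N (Xmat N) k i j"
    using assms by (simp add: mpow_Xmat omega_power_mult_cnj del: complex_cnj_power)
  finally show ?thesis
    by (simp add: Lkl_def kron_conj_def sid_def idmat_def)
qed

lemma Kmat_eq_qmarg_combination:
  assumes "i < N" "j < N"
  shows "Kmat N p i j = (\<Sum>k<N. complex_of_real (qmarg N p k) * (mpow N (Xmat N) k i j - idmat i j))"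
  using assms by (simp add: Kmat_def Lgen_def Lkl_diag qmarg_def sum_distrib_right)

lemma kolmogorov_cong:
  assumes "\<And>i j. i < N \<Longrightarrow> j < N \<Longrightarrow> M i j = M' i j"
  shows "kolmogorov N M = kolmogorov N M'"
  using assms by (simp add: kolmogorov_def)

lemma kolmogorov_nonneg_combination:
  assumes "finite A" "\<And>k. k \<in> A \<Longrightarrow> 0 \<le> c k" "\<And>k. k \<in> A \<Longrightarrow> kolmogorov N (M k)"
  shows "kolmogorov N (\<lambda>i j. \<Sum>k\<in>A. complex_of_real (c k) * M k i j)"
  unfolding kolmogorov_def
proof (intro conjI allI impI)
  fix i j assume "i < N" "j < N"
  then show "(\<Sum>k\<in>A. complex_of_real (c k) * M k i j) \<in> \<real>"
    using assms(3) by (intro sum_in_Reals) (auto simp: kolmogorov_def)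
next
  fix i j assume "i < N" "j < N" "i \<noteq> j"
  then show "0 \<le> Re (\<Sum>k\<in>A. complex_of_real (c k) * M k i j)"
    using assms(2,3) by (auto simp: Re_sum kolmogorov_def intro!: sum_nonneg)
next
  fix j assume "j < N"
  have "(\<Sum>i<N. \<Sum>k\<in>A. complex_of_real (c k) * M k i j)
      = (\<Sum>k\<in>A. complex_of_real (c k) * (\<Sum>i<N. M k i j))"
    by (subst sum.swap) (simp add: sum_distrib_left)
  also have "\<dots> = 0"
    using assms(3) \<open>j < N\<close> by (simp add: kolmogorov_def)
  finally show "(\<Sum>i<N. \<Sum>k\<in>A. complex_of_real (c k) * M k i j) = 0" .
qed

lemma kolmogorov_Xmat_pow_minus_id: "kolmogorov N (\<lambda>i j. mpow N (Xmat N) k i j - idmat i j)"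
proof -
  have "(\<Sum>i<N. mpow N (Xmat N) k i j - idmat i j) = 0" if "j < N" for j
  proof -
    have "(\<Sum>i<N. mpow N (Xmat N) k i j - idmat i j)
        = (\<Sum>i<N. (if i = (j + k) mod N then 1 else 0) - (if i = j then 1 else 0) :: complex)"
      using that by (intro sum.cong) (auto simp: mpow_Xmat idmat_def)
    also have "\<dots> = 0"
      using that by (simp add: sum_subtractf sum.delta')
    finally show ?thesis .
  qed
  then show ?thesis
    by (auto simp: kolmogorov_def mpow_Xmat idmat_def)
qed

theorem lemma3:
  fixes N :: nat and p :: "nat \<Rightarrow> nat \<Rightarrow> real"
  assumes "N \<ge> 2"
    and "\<forall>k<N. \<forall>l<N. 0 \<le> p k l"
    and "(\<Sum>k<N. \<Sum>l<N. p k l) = 1"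
  shows "(\<forall>i<N. \<forall>j<N.
            Kmat N p i j = (\<Sum>k<N. complex_of_real (qmarg N p k) * mpow N (Xmat N) k i j) - idmat i j
          \<and> Kmat N p i j = (\<Sum>k<N. complex_of_real (qmarg N p k) * (mpow N (Xmat N) k i j - idmat i j)))
       \<and> kolmogorov N (Kmat N p)
       \<and> (\<forall>k<N. kolmogorov N (\<lambda>i j. mpow N (Xmat N) k i j - idmat i j))"
proof -
  have qmarg_sum: "(\<Sum>k<N. complex_of_real (qmarg N p k)) = 1"
    using assms(3) by (simp add: qmarg_def flip: of_real_sum)
  have qmarg_nonneg: "0 \<le> qmarg N p k" if "k < N" for k
    using assms(2) that unfolding qmarg_def by (intro sum_nonneg) auto
  have K_shift_form: "Kmat N p i j
      = (\<Sum>k<N. complex_of_real (qmarg N p k) * mpow N (Xmat N) k i j) - idmat i j"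
    if "i < N" "j < N" for i j
    using that qmarg_sum
    by (simp add: Kmat_eq_qmarg_combination right_diff_distrib sum_subtractf flip: sum_distrib_right)
  have "kolmogorov N (Kmat N p)"
    using kolmogorov_nonneg_combination[of "{..<N}" "qmarg N p" N
        "\<lambda>k i j. mpow N (Xmat N) k i j - idmat i j"]
    by (simp add: kolmogorov_cong[OF Kmat_eq_qmarg_combination] qmarg_nonneg
        kolmogorov_Xmat_pow_minus_id)
  then show ?thesis
    using K_shift_form Kmat_eq_qmarg_combination kolmogorov_Xmat_pow_minus_id by blast
qed

end
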